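(* Let $A=(a_0,\dots,a_{n-1})$ be an integer array with $|a_m-a_{m+1}|=1$ for all $0\le m<n-1$. Let $0\le k\le i<n$ and $x\in\mathbb{Z}$ satisfy $i-a_i+x<k\le i$. Then $\mathrm{FS}_A(k,x)=\mathrm{FS}_A(i,x)$.
   Context: For an integer array $A=(a_0,\dots,a_{n-1})$, $\mathrm{FS}_A(i,x)$, for $0\le i<n$ and $x\in\mathbb{Z}$, denotes the minimal index $j>i$ such that $a_j\le x$, and is $0$ if no such $j$ exists. *)

theory Defs
  imports Main
begin

definition FS :: "int list \<Rightarrow> nat \<Rightarrow> int \<Rightarrow> nat" where
  "FS A i x = (if \<exists>j. i < j \<and> j < length A \<and> A ! j \<le> x
               then (LEAST j. i < j \<and> j < length A \<and> A ! j \<le> x) else 0)"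

end

theory Submission
  imports Defs
begin

text \<open>An array whose consecutive entries differ by at most one is 1-Lipschitz, so
  a_j \<ge> a_i - (i - j) > x for k \<le> j \<le> i. Hence no index in (k, i] satisfies
  a_j \<le> x, and the searches starting at k and at i find the same index.\<close>

lemma unit_steps_lipschitz:
  fixes A :: "int list"
  assumes steps: "\<forall>m. m + 1 < length A \<longrightarrow> \<bar>A ! m - A ! (m + 1)\<bar> \<le> 1"
    and "j \<le> i" and "i < length A"
  shows "\<bar>A ! i - A ! j\<bar> \<le> int (i - j)"
  using assms(2,3)
proof (induction i rule: dec_induct)
  case base
  then show ?case by simp
next
  case (step i)
  have "\<bar>A ! i - A ! (i + 1)\<bar> \<le> 1"
    using steps step.prems by simp
  with step show ?case by simp
qed

lemma FS_eq_if_no_hit_between: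
  assumes "k \<le> i" and "\<And>j. k < j \<Longrightarrow> j \<le> i \<Longrightarrow> x < A ! j"
  shows "FS A k x = FS A i x"
proof -
  have "(\<lambda>j. k < j \<and> j < length A \<and> A ! j \<le> x) = (\<lambda>j. i < j \<and> j < length A \<and> A ! j \<le> x)"
    using assms by (force simp: not_less)
  then show ?thesis
    unfolding FS_def by metis
qed

theorem claim2:
  fixes A :: "int list" and k i :: nat and x :: int
  assumes "\<forall>m. m + 1 < length A \<longrightarrow> \<bar>A ! m - A ! (m + 1)\<bar> = 1"
    and "k \<le> i" and "i < length A"
    and "int i - A ! i + x < int k"
  shows "FS A k x = FS A i x"
proof (rule FS_eq_if_no_hit_between[OF \<open>k \<le> i\<close>])
  fix j assume "k < j" "j \<le> i"
  have "\<bar>A ! i - A ! j\<bar> \<le> int (i - j)"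
    using unit_steps_lipschitz[OF _ \<open>j \<le> i\<close> \<open>i < length A\<close>] assms(1) by simp
  then show "x < A ! j"
    using \<open>k < j\<close> \<open>j \<le> i\<close> assms(4) by (simp add: of_nat_diff)
qed

end
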